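(* Write $Q:=3^\ell$ for some $\ell\ge 3$. Let $n_1,n_2,n_3,n_5,n_9$ be nonnegative integers for which $n_1+2n_2+3n_3+5n_5+9n_9=Q-1$ and the union of the base-$3$ expansions of the $n_j$'s consists of one copy of each $3^i$ with $1\le i\le\ell-2$ along with some partition of $2$. Then the base-$3$ expansion of $n_5$ contains $Q/9$, and the base-$3$ expansion of $n_9$ contains $Q/27$.
   Context: A term of the base-$p$ expansion of a nonnegative integer $m=\sum_j b_jp^j$ (with $0\le b_j\le p-1$) is some $b_jp^j$ with $b_j>0$. The union of the base-$p$ expansions of several integers means the multiset of all terms of all these integers. "Some partition of $2$" means the remaining terms (in the $3^0$ place) are either one copy of $2$ or two copies of $1$. *)

theory Defs
  imports Main "HOL-Library.Multiset"
begin

definition digit :: "nat \<Rightarrow> nat \<Rightarrow> nat \<Rightarrow> nat" where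
  "digit p m j = m div p ^ j mod p"

(* multiset of terms b_j p^j (b_j > 0) of the base-p expansion of m;
   digits j > m are zero for p \<ge> 2, so j \<le> m suffices *)
definition base_terms :: "nat \<Rightarrow> nat \<Rightarrow> nat multiset" where
  "base_terms p m = mset (map (\<lambda>j. digit p m j * p ^ j)
                          (filter (\<lambda>j. digit p m j > 0) [0..<Suc m]))"

end

theory Submission
  imports Defs
begin

(* Put h = l - 2. The hypothesis on the terms says that at each place 1 <= i <= h exactly one
   of the five numbers has ternary digit 1 and the others 0, that no digit is nonzero above
   place h, and that the digits at place 0 form a partition of 2. So the weighted column sums
   c_i (weights 1, 2, 3, 5, 9) satisfy sum_{i<=h} c_i 3^i = 9 * 3^h - 1 with c_i in
   {1, 2, 3, 5, 9} for i >= 1, and reducing mod 3 gives c_0 = 2 (mod 3), hence c_0 <= 14.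
   Then the columns below place k contribute less than 5 * 3^k, which forces c_h = 5 and then
   c_(h-1) = 9 (or c_0 = 11 = 9 + 2 if h = 1): n5 has digit 1 at place h and n9 at place h - 1. *)

lemma digit_less: "0 < p \<Longrightarrow> digit p n i < p"
  by (simp add: digit_def)

lemma digit_3_cases: "digit 3 n i \<in> {0, 1, 2}"
  using digit_less[of 3 n i] by auto

lemma digit_mult_power:
  assumes "d < p"
  shows "digit p (d * p ^ i) j = (if j = i then d else 0)"
proof (cases j i rule: linorder_cases)
  case less
  then have "i = j + Suc (i - j - 1)" by simp
  then have "p ^ i = p ^ j * (p ^ (i - j - 1) * p)"
    by (metis power_add power_Suc2)
  then have "d * p ^ i div p ^ j = d * p ^ (i - j - 1) * p"
    using assms by simp
  with less show ?thesis by (simp add: digit_def)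
next
  case equal
  with assms show ?thesis by (simp add: digit_def)
next
  case greater
  have "d * p ^ i < p ^ Suc i" using assms by simp
  also have "\<dots> \<le> p ^ j" using greater assms by (intro power_increasing) auto
  finally show ?thesis using greater by (simp add: digit_def)
qed

lemma mult_power_eq_mult_power_iff:
  fixes d e p i j :: nat
  assumes "0 < d" "d < p" "e < p"
  shows "d * p ^ i = e * p ^ j \<longleftrightarrow> d = e \<and> i = j"
proof
  assume "d * p ^ i = e * p ^ j"
  then have "digit p (d * p ^ i) i = digit p (e * p ^ j) i" by simp
  then show "d = e \<and> i = j"
    using assms by (simp add: digit_mult_power split: if_splits)
qed simp

lemma mod_power_eq_sum_digits: "n mod p ^ k = (\<Sum>i<k. digit p n i * p ^ i)"
proof (induction k)
  case (Suc k)
  have "n mod p ^ Suc k = p ^ k * digit p n k + n mod p ^ k"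
    unfolding digit_def by (simp only: power_Suc2 mod_mult2_eq)
  with Suc show ?case by simp
qed simp

lemma less_power_if_high_digits_zero:
  assumes "1 < p" "\<forall>i\<ge>k. digit p n i = 0"
  shows "n < p ^ k"
proof -
  define m where "m = n div p ^ k"
  have "digit p m i = 0" for i
    using assms(2)[rule_format, of "k + i"]
    by (simp add: m_def digit_def div_mult2_eq power_add)
  then have "m mod p ^ m = 0" by (simp add: mod_power_eq_sum_digits)
  moreover have "m < p ^ m" using assms(1) by (simp add: power_gt_expt)
  ultimately have "m = 0" by simp
  then show ?thesis using assms(1) by (simp add: m_def div_eq_0_iff)
qed

lemma sum_digits_if_high_digits_zero:
  "1 < p \<Longrightarrow> \<forall>i\<ge>k. digit p n i = 0 \<Longrightarrow> n = (\<Sum>i<k. digit p n i * p ^ i)"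
  by (metis less_power_if_high_digits_zero mod_less mod_power_eq_sum_digits)

lemma power_le_if_digit_nonzero: "digit p n i \<noteq> 0 \<Longrightarrow> p ^ i \<le> n"
  by (rule ccontr) (simp add: digit_def)

lemma count_base_terms:
  assumes "0 < d" "d < p"
  shows "count (base_terms p n) (d * p ^ i) = of_bool (digit p n i = d)"
proof -
  have "count (base_terms p n) (d * p ^ i)
      = length (filter (\<lambda>j. 0 < digit p n j \<and> digit p n j * p ^ j = d * p ^ i) [0..<Suc n])"
    unfolding base_terms_def count_mset count_list_eq_length_filter
    by (simp add: filter_map comp_def filter_filter conj_commute eq_commute[of "d * p ^ i"] del: upt_Suc)
  also have "(\<lambda>j. 0 < digit p n j \<and> digit p n j * p ^ j = d * p ^ i) = (\<lambda>j. j = i \<and> digit p n i = d)"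
    using assms digit_less[of p n] mult_power_eq_mult_power_iff[of _ p d] by fastforce
  also have "length (filter (\<lambda>j. j = i \<and> digit p n i = d) [0..<Suc n]) = of_bool (digit p n i = d)"
  proof (cases "digit p n i = d")
    case True
    then have "p ^ i \<le> n" using assms power_le_if_digit_nonzero by blast
    moreover have "i < p ^ i" using assms by (intro power_gt_expt) simp
    ultimately have "i < Suc n" by simp
    with True show ?thesis by (subst distinct_length_filter) (simp_all del: upt_Suc)
  qed simp
  finally show ?thesis .
qed

lemma power_in_base_terms_iff:
  assumes "1 < p"
  shows "p ^ i \<in># base_terms p n \<longleftrightarrow> digit p n i = 1"
  using count_base_terms[of 1 p n i] assms by (simp flip: count_greater_zero_iff)

lemma count_mset_set_powers:
  fixes d p i :: nat
  assumes "finite A" "0 < d" "d < p"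
  shows "count (mset_set ((\<lambda>j. p ^ j) ` A)) (d * p ^ i) = of_bool (d = 1 \<and> i \<in> A)"
proof -
  have "d * p ^ i = p ^ j \<longleftrightarrow> d = 1 \<and> i = j" for j
    using mult_power_eq_mult_power_iff[of d p 1 i j] assms by simp
  then have "d * p ^ i \<in> (\<lambda>j. p ^ j) ` A \<longleftrightarrow> d = 1 \<and> i \<in> A"
    by (simp add: image_iff)
  then show ?thesis using assms(1) by (simp add: count_mset_set')
qed

lemma sum_mult_power_mod:
  fixes c :: "nat \<Rightarrow> nat"
  shows "(\<Sum>i<Suc k. c i * p ^ i) mod p = c 0 mod p"
proof -
  have "(\<Sum>i<Suc k. c i * p ^ i) = c 0 + p * (\<Sum>i<k. c (Suc i) * p ^ i)"
    by (simp add: sum.lessThan_Suc_shift sum_distrib_left mult.left_commute del: sum.lessThan_Suc)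
  then show ?thesis by simp
qed

lemma sum_low_columns_less:
  fixes c :: "nat \<Rightarrow> nat"
  assumes "1 \<le> k" "c 0 \<le> 14" "\<forall>i\<in>{1..<k}. c i \<le> 9"
  shows "(\<Sum>i<k. c i * 3 ^ i) < 5 * 3 ^ k"
  using assms
proof (induction k)
  case (Suc k)
  show ?case
  proof (cases "k = 0")
    case False
    then have "(\<Sum>i<k. c i * 3 ^ i) < 5 * 3 ^ k" using Suc by simp
    moreover have "c k * 3 ^ k \<le> 9 * 3 ^ k" using Suc.prems(3) False by simp
    ultimately have "(\<Sum>i<k. c i * 3 ^ i) + c k * 3 ^ k < 15 * 3 ^ k" by linarith
    then show ?thesis by simp
  qed (use Suc.prems in simp)
qed simp

lemma top_column_bounds:
  fixes T c b m :: nat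
  assumes "T + c * b + 1 = m * b" "T < 5 * b"
  shows "c < m" "m \<le> c + 5"
proof -
  have "c * b < m * b" using assms(1) by linarith
  then show "c < m" by simp
  have "m * b \<le> (c + 5) * b" using assms by (simp add: algebra_simps)
  then show "m \<le> c + 5" using assms(2) by simp
qed

lemma top_columns_eq:
  fixes c :: "nat \<Rightarrow> nat"
  assumes "1 \<le> h" "c 0 \<le> 14" "\<forall>i\<in>{1..h}. c i \<in> {1, 2, 3, 5, 9}"
    and "(\<Sum>i<Suc h. c i * 3 ^ i) + 1 = 9 * 3 ^ h"
  shows "c h = 5" "h = 1 \<Longrightarrow> c 0 = 11" "2 \<le> h \<Longrightarrow> c (h - 1) = 9"
proof -
  have lower: "(\<Sum>i<k. c i * 3 ^ i) < 5 * 3 ^ k" if "1 \<le> k" "k \<le> h" for k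
  proof (rule sum_low_columns_less)
    show "\<forall>i\<in>{1..<k}. c i \<le> 9"
    proof
      fix i assume "i \<in> {1..<k}"
      then have "c i \<in> {1, 2, 3, 5, 9}" using that assms(3) by auto
      then show "c i \<le> 9" by auto
    qed
  qed (use that assms(2) in auto)
  have "(\<Sum>i<h. c i * 3 ^ i) + c h * 3 ^ h + 1 = 9 * 3 ^ h"
    using assms(4) by simp
  with lower[of h] assms(1) have "4 \<le> c h" "c h < 9"
    using top_column_bounds by fastforce+
  moreover have "c h \<in> {1, 2, 3, 5, 9}" using assms(1,3) by auto
  ultimately show "c h = 5" by auto
  with assms(4) have rest: "(\<Sum>i<h. c i * 3 ^ i) + 1 = 4 * 3 ^ h" by simp
  show "c 0 = 11" if "h = 1" using rest that by simp
  show "c (h - 1) = 9" if h2: "2 \<le> h"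
  proof -
    obtain g where g: "h = Suc g" "1 \<le> g" using h2 by (cases h) auto
    with rest have "(\<Sum>i<g. c i * 3 ^ i) + c g * 3 ^ g + 1 = 12 * 3 ^ g" by simp
    with lower[of g] g have "7 \<le> c g" "c g < 12"
      using top_column_bounds by fastforce+
    moreover have "c g \<in> {1, 2, 3, 5, 9}" using g assms(3) by auto
    ultimately show ?thesis using g by auto
  qed
qed

locale powers_split =
  fixes h n1 n2 n3 n5 n9 :: nat
  assumes terms_eq:
    "base_terms 3 n1 + base_terms 3 n2 + base_terms 3 n3 + base_terms 3 n5 + base_terms 3 n9
       = mset_set ((\<lambda>i. 3 ^ i) ` {1..h}) + {#2#}
     \<or> base_terms 3 n1 + base_terms 3 n2 + base_terms 3 n3 + base_terms 3 n5 + base_terms 3 n9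
       = mset_set ((\<lambda>i. 3 ^ i) ` {1..h}) + {#1, 1#}"
begin

definition column_digits :: "nat \<Rightarrow> nat multiset" where
  "column_digits i = {#digit 3 n1 i, digit 3 n2 i, digit 3 n3 i, digit 3 n5 i, digit 3 n9 i#}"

definition column :: "nat \<Rightarrow> nat" where
  "column i = digit 3 n1 i + 2 * digit 3 n2 i + 3 * digit 3 n3 i + 5 * digit 3 n5 i + 9 * digit 3 n9 i"

lemma count_column_digits:
  obtains R :: "nat multiset" where "R = {#2#} \<or> R = {#1, 1#}"
    and "\<And>d i. d \<in> {1, 2} \<Longrightarrow>
           count (column_digits i) d = of_bool (d = 1 \<and> i \<in> {1..h}) + count R (d * 3 ^ i)"
proof -
  let ?P = "base_terms 3 n1 + base_terms 3 n2 + base_terms 3 n3 + base_terms 3 n5 + base_terms 3 n9"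
  obtain R :: "nat multiset" where R: "R = {#2#} \<or> R = {#1, 1#}"
    and P: "?P = mset_set ((\<lambda>i. 3 ^ i) ` {1..h}) + R"
    using terms_eq by blast
  have "count (column_digits i) d = count ?P (d * 3 ^ i)" if "d \<in> {1, 2}" for d i
  proof -
    have "0 < d" "d < 3" using that by auto
    then show ?thesis by (simp add: column_digits_def count_base_terms of_bool_def)
  qed
  also have "count ?P (d * 3 ^ i) = of_bool (d = 1 \<and> i \<in> {1..h}) + count R (d * 3 ^ i)"
    if "d \<in> {1, 2}" for d i
  proof -
    have "0 < d" "d < 3" using that by auto
    then show ?thesis by (simp add: P count_mset_set_powers)
  qed
  finally show ?thesis using that R by blast
qed

lemma column_digit_counts_pos:
  assumes "1 \<le> i"
  shows "count (column_digits i) 1 = of_bool (i \<le> h)" "count (column_digits i) 2 = 0"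
proof -
  obtain R :: "nat multiset" where R: "R = {#2#} \<or> R = {#1, 1#}"
    and counts: "\<And>d i. d \<in> {1, 2} \<Longrightarrow>
           count (column_digits i) d = of_bool (d = 1 \<and> i \<in> {1..h}) + count R (d * 3 ^ i)"
    using count_column_digits by blast
  have "(3::nat) ^ 1 \<le> 3 ^ i" using assms by (intro power_increasing) auto
  then have "count R (3 ^ i) = 0" "count R (2 * 3 ^ i) = 0"
    using R assms by auto
  then show "count (column_digits i) 1 = of_bool (i \<le> h)" "count (column_digits i) 2 = 0"
    using counts[of 1 i] counts[of 2 i] assms by auto
qed

lemma column_digit_counts_0:
  "count (column_digits 0) 1 = 0 \<and> count (column_digits 0) 2 = 1
   \<or> count (column_digits 0) 1 = 2 \<and> count (column_digits 0) 2 = 0"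
proof -
  obtain R :: "nat multiset" where R: "R = {#2#} \<or> R = {#1, 1#}"
    and counts: "\<And>d i. d \<in> {1, 2} \<Longrightarrow>
           count (column_digits i) d = of_bool (d = 1 \<and> i \<in> {1..h}) + count R (d * 3 ^ i)"
    using count_column_digits by blast
  show ?thesis using R counts[of 1 0] counts[of 2 0] by auto
qed

lemma column_digits_high:
  assumes "h < i" "x \<in># column_digits i"
  shows "x = 0"
proof -
  have "x < 3" using assms(2) by (auto simp: column_digits_def digit_less)
  moreover have "1 \<notin># column_digits i" "2 \<notin># column_digits i"
    using column_digit_counts_pos[of i] assms(1) by (simp_all add: not_in_iff)
  then have "x \<noteq> 1" "x \<noteq> 2" using assms(2) by auto
  ultimately show ?thesis by arith
qed

lemma weighted_sum_eq_columns:
  "n1 + 2 * n2 + 3 * n3 + 5 * n5 + 9 * n9 = (\<Sum>i<Suc h. column i * 3 ^ i)"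
proof -
  have "n = (\<Sum>i<Suc h. digit 3 n i * 3 ^ i)" if "\<forall>i. digit 3 n i \<in># column_digits i" for n
  proof (rule sum_digits_if_high_digits_zero)
    show "\<forall>i\<ge>Suc h. digit 3 n i = 0"
      using that column_digits_high by (simp add: Suc_le_eq)
  qed simp
  then have expansions:
    "n1 = (\<Sum>i<Suc h. digit 3 n1 i * 3 ^ i)" "n2 = (\<Sum>i<Suc h. digit 3 n2 i * 3 ^ i)"
    "n3 = (\<Sum>i<Suc h. digit 3 n3 i * 3 ^ i)" "n5 = (\<Sum>i<Suc h. digit 3 n5 i * 3 ^ i)"
    "n9 = (\<Sum>i<Suc h. digit 3 n9 i * 3 ^ i)"
    by (simp_all add: column_digits_def)
  have "(\<Sum>i<Suc h. column i * 3 ^ i)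
      = (\<Sum>i<Suc h. digit 3 n1 i * 3 ^ i) + 2 * (\<Sum>i<Suc h. digit 3 n2 i * 3 ^ i)
        + 3 * (\<Sum>i<Suc h. digit 3 n3 i * 3 ^ i) + 5 * (\<Sum>i<Suc h. digit 3 n5 i * 3 ^ i)
        + 9 * (\<Sum>i<Suc h. digit 3 n9 i * 3 ^ i)"
    unfolding column_def
    by (simp add: sum.distrib sum_distrib_left algebra_simps del: sum.lessThan_Suc)
  then show ?thesis by (simp only: flip: expansions)
qed

lemma column_middle:
  assumes "i \<in> {1..h}"
  shows "column i \<in> {1, 2, 3, 5, 9}"
    and "column i = 5 \<Longrightarrow> digit 3 n5 i = 1"
    and "column i = 9 \<Longrightarrow> digit 3 n9 i = 1"
proof -
  have "count (column_digits i) 1 = 1" "count (column_digits i) 2 = 0"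
    using column_digit_counts_pos[of i] assms by auto
  with digit_3_cases[of n1 i] digit_3_cases[of n2 i] digit_3_cases[of n3 i]
    digit_3_cases[of n5 i] digit_3_cases[of n9 i]
  have "column i \<in> {1, 2, 3, 5, 9} \<and> (column i = 5 \<longrightarrow> digit 3 n5 i = 1)
      \<and> (column i = 9 \<longrightarrow> digit 3 n9 i = 1)"
    unfolding column_def column_digits_def by (elim insertE emptyE; simp)
  then show "column i \<in> {1, 2, 3, 5, 9}" "column i = 5 \<Longrightarrow> digit 3 n5 i = 1"
    "column i = 9 \<Longrightarrow> digit 3 n9 i = 1" by auto
qed

lemma column_0:
  assumes "column 0 mod 3 = 2"
  shows "column 0 \<le> 14" "column 0 = 11 \<Longrightarrow> digit 3 n9 0 = 1"
proof -
  from column_digit_counts_0 assms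
    digit_3_cases[of n1 0] digit_3_cases[of n2 0] digit_3_cases[of n3 0]
    digit_3_cases[of n5 0] digit_3_cases[of n9 0]
  have "column 0 \<le> 14 \<and> (column 0 = 11 \<longrightarrow> digit 3 n9 0 = 1)"
    unfolding column_def column_digits_def by (elim insertE emptyE; simp)
  then show "column 0 \<le> 14" "column 0 = 11 \<Longrightarrow> digit 3 n9 0 = 1" by auto
qed

lemma top_digits:
  assumes "1 \<le> h" "n1 + 2 * n2 + 3 * n3 + 5 * n5 + 9 * n9 + 1 = 9 * 3 ^ h"
  shows "digit 3 n5 h = 1" "digit 3 n9 (h - 1) = 1"
proof -
  have sum: "(\<Sum>i<Suc h. column i * 3 ^ i) + 1 = 9 * 3 ^ h"
    using assms(2) weighted_sum_eq_columns by simp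
  have "(\<Sum>i<Suc h. column i * 3 ^ i) mod 3 = 2"
  proof -
    have "((\<Sum>i<Suc h. column i * 3 ^ i) + 1) mod 3 = 0" using sum by simp
    then show ?thesis by presburger
  qed
  then have column_0_mod: "column 0 mod 3 = 2" by (metis sum_mult_power_mod)
  then have c0: "column 0 \<le> 14" by (rule column_0)
  have pos: "\<forall>i\<in>{1..h}. column i \<in> {1, 2, 3, 5, 9}" using column_middle(1) by blast
  note top = top_columns_eq[OF assms(1) c0 pos sum]
  show "digit 3 n5 h = 1" using top(1) column_middle(2) assms(1) by simp
  show "digit 3 n9 (h - 1) = 1"
  proof (cases "h = 1")
    case True
    then show ?thesis using top(2) column_0(2) column_0_mod by simp
  next
    case False
    then show ?thesis using top(3) column_middle(3)[of "h - 1"] assms(1) by simp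
  qed
qed

end

theorem lemma4p1:
  fixes l Q n1 n2 n3 n5 n9 :: nat
  assumes "l \<ge> 3"
    and "Q = 3 ^ l"
    and "n1 + 2 * n2 + 3 * n3 + 5 * n5 + 9 * n9 = Q - 1"
    and "base_terms 3 n1 + base_terms 3 n2 + base_terms 3 n3 + base_terms 3 n5 + base_terms 3 n9
           = mset_set ((\<lambda>i. 3 ^ i) ` {1..l - 2}) + {#2#}
         \<or> base_terms 3 n1 + base_terms 3 n2 + base_terms 3 n3 + base_terms 3 n5 + base_terms 3 n9
           = mset_set ((\<lambda>i. 3 ^ i) ` {1..l - 2}) + {#1, 1#}"
  shows "Q div 9 \<in># base_terms 3 n5 \<and> Q div 27 \<in># base_terms 3 n9"
proof -
  interpret powers_split "l - 2" n1 n2 n3 n5 n9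
    using assms(4) by unfold_locales
  obtain g where g: "l - 2 = Suc g" using assms(1) by (cases "l - 2") auto
  have "2 + (l - 2) = l" using assms(1) by simp
  then have Q: "Q = 9 * 3 ^ (l - 2)"
    using assms(2) power_add[of "3::nat" 2 "l - 2"] by simp
  then have "n1 + 2 * n2 + 3 * n3 + 5 * n5 + 9 * n9 + 1 = 9 * 3 ^ (l - 2)"
    using assms(3) by simp
  then have "digit 3 n5 (Suc g) = 1" "digit 3 n9 g = 1"
    using top_digits g by auto
  moreover have "Q div 9 = 3 ^ Suc g" "Q div 27 = 3 ^ g"
    using Q g by simp_all
  ultimately show ?thesis
    using power_in_base_terms_iff[of 3 "Suc g" n5] power_in_base_terms_iff[of 3 g n9] by simp
qed

end
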